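(* Let $0<\theta<1$, let $\rho,\tau$ be positive integers with $\rho\le\tau$, and let $m$ be a positive integer with $m\neq 2^\beta$ for every integer $\beta\ge0$. Put $T=2^{\lceil\lg m\rceil}-m-1$. Then $$L_m^{\rho/\tau}(\theta)=\int_{-\infty}^{\infty}\ell_m^{\rho/\tau}(\varepsilon)\,f_\theta(\varepsilon)\,d\varepsilon = 1+\lfloor\lg m\rfloor+\frac{1}{2}\,\frac{\theta^{(T+1)/2}}{1-\theta^{m/2}}\left(\theta^{\frac{\rho}{2\tau}}+\theta^{-\frac{\rho}{2\tau}}\right).$$
   Context: $\lg$ denotes $\log_2$. The Laplace density with parameter $\theta\in(0,1)$ is $f_\theta(\varepsilon)=-\frac{\ln\theta}{2}\theta^{|\varepsilon|}$, $\varepsilon\in\mathbb{R}$. The generalized Rice mapping $M:\mathbb{R}\to\mathbb{Z}_{\ge0}$ is $M(\varepsilon)=\lfloor 2\varepsilon\rfloor$ if $\varepsilon\ge 0$ and $M(\varepsilon)=-\lfloor 2\varepsilon\rfloor-1$ if $\varepsilon<0$. For a positive integer $m$, the Golomb codeword of a non-negative integer $N$ consists of $j=\lfloor N/m\rfloor$ in unary ($j+1$ bits) followed by $k=N \bmod m$ in minimal binary, which uses $\lfloor\lg m\rfloor$ bits if $k<2^{\lceil\lg m\rceil}-m$ and $\lceil\lg m\rceil$ bits otherwise; let $\lambda_m(N)$ be the total number of bits. The (finest-precision) code length of a real residual $\varepsilon$ is $\ell_m(\varepsilon)=\lambda_m(M(\varepsilon))$. For positive integers $\rho\le\tau$ (precision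 $\rho/\tau$), the code length assigned to the real residual $\varepsilon$ at precision $\rho/\tau$ is modeled as the finest-precision assignment shifted left by $\rho/(2\tau)$: $\ell_m^{\rho/\tau}(\varepsilon)=\ell_m(\varepsilon+\rho/(2\tau))$. $L_m^{\rho/\tau}(\theta)$ denotes the average code length under the Laplace density, as in the claim. *)

theory Defs
  imports "HOL-Analysis.Analysis"
begin

definition lg :: "real \<Rightarrow> real" where
  "lg x = log 2 x"

definition laplace_density :: "real \<Rightarrow> real \<Rightarrow> real" where
  "laplace_density \<theta> e = - (ln \<theta>) / 2 * \<theta> powr \<bar>e\<bar>"

definition rice_map :: "real \<Rightarrow> nat" where
  "rice_map e = (if e \<ge> 0 then nat \<lfloor>2 * e\<rfloor> else nat (- \<lfloor>2 * e\<rfloor> - 1))"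

text \<open>Length in bits of the Golomb codeword of N with parameter m:
  unary part (N div m + 1 bits) plus minimal binary code of N mod m.\<close>
definition golomb_len :: "nat \<Rightarrow> nat \<Rightarrow> nat" where
  "golomb_len m N =
     (N div m + 1) +
     (if N mod m < 2 ^ nat \<lceil>lg (real m)\<rceil> - m
      then nat \<lfloor>lg (real m)\<rfloor> else nat \<lceil>lg (real m)\<rceil>)"

definition code_len :: "nat \<Rightarrow> real \<Rightarrow> real" where
  "code_len m e = real (golomb_len m (rice_map e))"

definition code_len_prec :: "nat \<Rightarrow> nat \<Rightarrow> nat \<Rightarrow> real \<Rightarrow> real" where
  "code_len_prec m \<rho> \<tau> e = code_len m (e + real \<rho> / (2 * real \<tau>))"

definition avg_code_len :: "nat \<Rightarrow> nat \<Rightarrow> nat \<Rightarrow> real \<Rightarrow> real" where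
  "avg_code_len m \<rho> \<tau> \<theta> =
     integral UNIV (\<lambda>e. code_len_prec m \<rho> \<tau> e * laplace_density \<theta> e)"

end

theory Submission
  imports Defs
begin

text \<open>With \<open>F = \<lfloor>lg m\<rfloor>\<close> and \<open>a = 2^(F+1) - m\<close>, the Golomb codeword of \<open>N\<close> has
  \<open>1 + F\<close> bits plus one bit for every term of the progression \<open>a, a + m, a + 2m, \<dots>\<close> that
  is at most \<open>N\<close>. The event that the Rice index of \<open>\<epsilon> + s\<close> reaches \<open>n\<close> is the union of two
  Laplace tails, of probability \<open>(\<theta>^(n/2-s) + \<theta>^(n/2+s))/2\<close>; summing these probabilities
  along the progression (monotone convergence) gives a geometric series.\<close>

lemma laplace_density_nonneg: "0 < \<theta> \<Longrightarrow> \<theta> < 1 \<Longrightarrow> 0 \<le> laplace_density \<theta> x"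
  unfolding laplace_density_def by (simp add: divide_nonpos_pos mult_nonpos_nonneg)

lemma borel_measurable_laplace_density [measurable]: "laplace_density \<theta> \<in> borel_measurable borel"
  unfolding laplace_density_def by measurable

lemma has_integral_laplace_density_atLeast:
  assumes "0 < \<theta>" "\<theta> < 1" "0 \<le> b"
  shows "(laplace_density \<theta> has_integral \<theta> powr b / 2) {b..}"
proof -
  define k where "k = - ln \<theta>"
  have k: "k > 0" using assms by (simp add: k_def)
  have "((\<lambda>x. k/2 * exp (-k*x)) has_integral k/2 * (exp (-k*b)/k)) {b..}"
    by (intro has_integral_mult_right has_integral_exp_minus_to_infinity k)
  moreover have "k/2 * (exp (-k*b)/k) = \<theta> powr b / 2"
    using k assms by (simp add: k_def powr_def)
  ultimately have "((\<lambda>x. k/2 * exp (-k*x)) has_integral \<theta> powr b / 2) {b..}"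
    by (simp only:)
  then show ?thesis
    by (rule has_integral_eq[rotated]) (use assms in \<open>simp add: laplace_density_def k_def powr_def\<close>)
qed

lemma nn_integral_laplace_density_atLeast:
  assumes "0 < \<theta>" "\<theta> < 1" "0 \<le> b"
  shows "(\<integral>\<^sup>+x\<in>{b..}. ennreal (laplace_density \<theta> x) \<partial>lborel) = ennreal (\<theta> powr b / 2)"
  by (rule nn_integral_has_integral_lebesgue'[OF laplace_density_nonneg
        has_integral_laplace_density_atLeast]) (use assms in auto)

lemma nn_integral_laplace_density_lessThan:
  assumes "0 < \<theta>" "\<theta> < 1" "0 \<le> b"
  shows "(\<integral>\<^sup>+x\<in>{..<-b}. ennreal (laplace_density \<theta> x) \<partial>lborel) = ennreal (\<theta> powr b / 2)"
proof -
  have open_ray: "(laplace_density \<theta> has_integral \<theta> powr b / 2) {b<..}"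
    using has_integral_laplace_density_atLeast[OF assms]
    by (subst has_integral_spike_set_eq[where T = "{b..}"]) (auto intro: negligible_subset[of "{b}"])
  have "(\<integral>\<^sup>+x\<in>{b<..}. ennreal (laplace_density \<theta> x) \<partial>lborel) = ennreal (\<theta> powr b / 2)"
    by (rule nn_integral_has_integral_lebesgue'[OF _ open_ray]) (simp add: laplace_density_nonneg assms)
  moreover have "(\<integral>\<^sup>+x\<in>{..<-b}. ennreal (laplace_density \<theta> x) \<partial>lborel)
      = (\<integral>\<^sup>+x\<in>{b<..}. ennreal (laplace_density \<theta> x) \<partial>lborel)"
    using nn_integral_real_affine[of "\<lambda>x. ennreal (laplace_density \<theta> x) * indicator {..<-b} x" "-1" 0]
    by (simp add: laplace_density_def indicator_def)
  ultimately show ?thesis by simp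
qed

lemma nn_integral_laplace_density_tails:
  assumes "0 < \<theta>" "\<theta> < 1" "0 \<le> lo" "0 \<le> hi"
  shows "(\<integral>\<^sup>+x\<in>{lo..} \<union> {..<-hi}. ennreal (laplace_density \<theta> x) \<partial>lborel)
    = ennreal ((\<theta> powr lo + \<theta> powr hi) / 2)"
proof -
  have "(\<integral>\<^sup>+x\<in>{lo..} \<union> {..<-hi}. ennreal (laplace_density \<theta> x) \<partial>lborel)
     = (\<integral>\<^sup>+x. ennreal (laplace_density \<theta> x) * indicator {lo..} x
              + ennreal (laplace_density \<theta> x) * indicator {..<-hi} x \<partial>lborel)"
    using assms by (intro nn_integral_cong) (auto simp: indicator_def)
  also have "\<dots> = ennreal (\<theta> powr lo / 2) + ennreal (\<theta> powr hi / 2)"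
    by (subst nn_integral_add)
       (simp_all add: nn_integral_laplace_density_atLeast nn_integral_laplace_density_lessThan assms)
  finally show ?thesis by (simp add: add_divide_distrib)
qed

lemma nn_integral_laplace_density:
  assumes "0 < \<theta>" "\<theta> < 1"
  shows "(\<integral>\<^sup>+x. ennreal (laplace_density \<theta> x) \<partial>lborel) = 1"
proof -
  have "{0..} \<union> {..<0} = (UNIV :: real set)" by auto
  then show ?thesis using nn_integral_laplace_density_tails[OF assms order_refl order_refl] assms by simp
qed

lemma progression_le_eq_lessThan:
  fixes a m N :: nat
  assumes "0 < m" "a \<le> m"
  shows "{i. a + i * m \<le> N} = {..< N div m + (if a \<le> N mod m then 1 else 0)}"
proof -
  define j where "j = N div m"
  define k where "k = N mod m"
  have N: "N = j * m + k" "k < m" using assms(1) by (simp_all add: j_def k_def)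
  have "a + i * m \<le> N \<longleftrightarrow> i < j + (if a \<le> k then 1 else 0)" for i
  proof (cases i j rule: linorder_cases)
    case less
    then have "(i + 1) * m \<le> j * m" by (intro mult_right_mono) simp_all
    then show ?thesis using less N assms(2) by (auto simp: algebra_simps)
  next
    case equal
    then show ?thesis using N by auto
  next
    case greater
    then have "(j + 1) * m \<le> i * m" by (intro mult_right_mono) simp_all
    then show ?thesis using greater N by (auto simp: algebra_simps)
  qed
  then show ?thesis by (auto simp: j_def k_def)
qed

lemma golomb_len_eq_card:
  fixes m F N :: nat
  assumes "2 ^ F \<le> m" "m < 2 ^ (F + 1)"
  shows "golomb_len m N = 1 + F + card {i. 2 ^ (F + 1) - m + i * m \<le> N}"
proof -
  have m: "0 < m" using assms(1) by (metis le_0_eq not_gr0 power_eq_0_iff zero_neq_numeral)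
  have floor_lg: "nat \<lfloor>lg m\<rfloor> = F" using floor_log_nat_eq_if[OF assms] by (simp add: lg_def)
  define a where "a = 2 ^ (F + 1) - m"
  have "a \<le> m" using assms(1) by (simp add: a_def)
  then have card: "card {i. a + i * m \<le> N} = N div m + (if a \<le> N mod m then 1 else 0)"
    by (simp add: progression_le_eq_lessThan[OF m])
  show ?thesis
  proof (cases "m = 2 ^ F")
    case True
    then have "nat \<lceil>lg m\<rceil> = F" "a = m" by (simp_all add: lg_def a_def)
    moreover have "\<not> m \<le> N mod m" using mod_less_divisor[OF m, of N] by linarith
    ultimately show ?thesis using card True unfolding golomb_len_def floor_lg a_def by simp
  next
    case False
    then have "nat \<lceil>lg m\<rceil> = F + 1"
      using ceiling_log_nat_eq_if[of 2 F m] assms by (simp add: lg_def)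
    then show ?thesis using card unfolding golomb_len_def floor_lg a_def by auto
  qed
qed

lemma measurable_rice_map [measurable]: "rice_map \<in> measurable borel (count_space UNIV)"
  unfolding rice_map_def by measurable

lemma rice_map_ge_iff:
  assumes "1 \<le> n"
  shows "n \<le> rice_map y \<longleftrightarrow> real n / 2 \<le> y \<or> y < - real n / 2"
proof (cases "y \<ge> 0")
  case True
  then have "n \<le> rice_map y \<longleftrightarrow> real n \<le> 2 * y"
    using assms unfolding rice_map_def by (auto simp: le_floor_iff le_nat_iff)
  then show ?thesis using True by auto
next
  case False
  then have "n \<le> rice_map y \<longleftrightarrow> \<lfloor>2 * y\<rfloor> < - int n"
    using assms unfolding rice_map_def by auto
  also have "\<dots> \<longleftrightarrow> 2 * y < - real n" by (simp add: floor_less_iff)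
  finally show ?thesis using False assms by auto
qed

definition rice_tail :: "real \<Rightarrow> nat \<Rightarrow> real set" where
  "rice_tail s n = {real n / 2 - s..} \<union> {..< - (real n / 2 + s)}"

lemma mem_rice_tail_iff: "1 \<le> n \<Longrightarrow> x \<in> rice_tail s n \<longleftrightarrow> n \<le> rice_map (x + s)"
  unfolding rice_tail_def by (subst rice_map_ge_iff) auto

lemma sets_rice_tail [measurable]: "rice_tail s n \<in> sets borel"
  unfolding rice_tail_def by simp

lemma nn_integral_laplace_density_rice_tail:
  assumes "0 < \<theta>" "\<theta> < 1" "0 \<le> s" "s \<le> real n / 2"
  shows "(\<integral>\<^sup>+x\<in>rice_tail s n. ennreal (laplace_density \<theta> x) \<partial>lborel)
    = ennreal ((\<theta> powr (real n / 2 - s) + \<theta> powr (real n / 2 + s)) / 2)"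
  unfolding rice_tail_def by (rule nn_integral_laplace_density_tails) (use assms in auto)

lemma finite_rice_tail_progression:
  fixes a m :: nat
  assumes "0 < m" "1 \<le> a"
  shows "finite {i. x \<in> rice_tail s (a + i * m)}"
proof (rule finite_subset)
  have "i * 1 \<le> i * m" for i using assms(1) by (intro mult_le_mono2) simp
  then have "i \<le> a + i * m" for i by (simp add: trans_le_add2)
  then show "{i. x \<in> rice_tail s (a + i * m)} \<subseteq> {..rice_map (x + s)}"
    using assms(2) by (auto simp: mem_rice_tail_iff intro: order_trans)
qed simp

lemma code_len_shift_eq_card:
  fixes m F :: nat
  assumes "2 ^ F \<le> m" "m < 2 ^ (F + 1)"
  shows "code_len m (x + s) = 1 + F + card {i. x \<in> rice_tail s (2 ^ (F + 1) - m + i * m)}"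
proof -
  have "1 \<le> 2 ^ (F + 1) - m + i * m" for i using assms(2) by simp
  then show ?thesis by (simp add: code_len_def golomb_len_eq_card[OF assms] mem_rice_tail_iff)
qed

lemma card_mult_eq_suminf_indicator:
  fixes A :: "nat \<Rightarrow> 'a set" and c :: ennreal
  assumes "finite {i. x \<in> A i}"
  shows "of_nat (card {i. x \<in> A i}) * c = (\<Sum>i. c * indicator (A i) x)"
proof -
  have "(\<Sum>i. c * indicator (A i) x) = (\<Sum>i\<in>{i. x \<in> A i}. c * indicator (A i) x)"
    by (rule suminf_finite[OF assms]) simp
  then show ?thesis by (simp add: mult.commute)
qed

lemma powr_less_one_of_base_less_one:
  fixes x e :: real
  assumes "0 < x" "x < 1" "0 < e"
  shows "x powr e < 1"
  using powr_less_mono'[OF assms(1,2,3)] assms(1) by simp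

lemma sums_laplace_tails:
  fixes \<theta> s :: real and a m :: nat
  assumes "0 < \<theta>" "\<theta> < 1" "0 < m"
  shows "(\<lambda>i. (\<theta> powr (real (a + i * m) / 2 - s) + \<theta> powr (real (a + i * m) / 2 + s)) / 2) sums
    (\<theta> powr (real a / 2) * (\<theta> powr s + \<theta> powr (- s)) / (2 * (1 - \<theta> powr (real m / 2))))"
proof -
  define q where "q = \<theta> powr (real m / 2)"
  define C where "C = \<theta> powr (real a / 2) * (\<theta> powr s + \<theta> powr (- s)) / 2"
  have q: "0 < q" "q < 1"
    using assms powr_less_one_of_base_less_one[OF assms(1,2)] by (auto simp: q_def)
  have term_eq: "(\<theta> powr (real (a + i * m) / 2 - s) + \<theta> powr (real (a + i * m) / 2 + s)) / 2 = C * q ^ i"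
    for i
  proof -
    have q_pow: "q ^ i = \<theta> powr (real i * (real m / 2))"
      using assms(1) by (simp add: q_def powr_powr mult.commute flip: powr_realpow)
    have "real (a + i * m) / 2 - s = real a / 2 + - s + real i * (real m / 2)"
      "real (a + i * m) / 2 + s = real a / 2 + s + real i * (real m / 2)"
      by (simp_all add: field_simps)
    then have "\<theta> powr (real (a + i * m) / 2 - s) = \<theta> powr (real a / 2) * \<theta> powr (- s) * q ^ i"
      "\<theta> powr (real (a + i * m) / 2 + s) = \<theta> powr (real a / 2) * \<theta> powr s * q ^ i"
      by (simp_all only: powr_add q_pow)
    then show ?thesis by (simp add: C_def algebra_simps)
  qed
  have geometric: "(\<lambda>i. C * q ^ i) sums (C / (1 - q))"
    using sums_mult[OF geometric_sums[of q], of C] q by simp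
  have limit_eq: "\<theta> powr (real a / 2) * (\<theta> powr s + \<theta> powr (- s)) / (2 * (1 - \<theta> powr (real m / 2)))
      = C / (1 - q)"
    by (simp add: C_def q_def)
  show ?thesis unfolding term_eq limit_eq by (rule geometric)
qed

lemma code_len_shift_mult_eq_suminf:
  fixes m F :: nat
  assumes F: "2 ^ F \<le> m" "m < 2 ^ (F + 1)" and "0 \<le> c"
  shows "ennreal (code_len m (x + s) * c)
    = of_nat (1 + F) * ennreal c + (\<Sum>i. ennreal c * indicator (rice_tail s (2 ^ (F + 1) - m + i * m)) x)"
proof -
  have "0 < m" using F(1) by (metis le_0_eq not_gr0 power_eq_0_iff zero_neq_numeral)
  moreover have "1 \<le> 2 ^ (F + 1) - m" using F(2) by simp
  ultimately have "finite {i. x \<in> rice_tail s (2 ^ (F + 1) - m + i * m)}"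
    by (rule finite_rice_tail_progression)
  moreover have "ennreal (code_len m (x + s) * c) = of_nat (1 + F) * ennreal c
      + of_nat (card {i. x \<in> rice_tail s (2 ^ (F + 1) - m + i * m)}) * ennreal c"
    using assms(3) unfolding code_len_shift_eq_card[OF F]
    by (simp add: distrib_right ennreal_mult'' ennreal_of_nat_eq_real_of_nat)
  ultimately show ?thesis by (simp only: card_mult_eq_suminf_indicator)
qed

lemma suminf_nn_integral_laplace_density_rice_tails:
  fixes a m :: nat
  assumes \<theta>: "0 < \<theta>" "\<theta> < 1" and s: "0 \<le> s" "s \<le> 1/2" and "0 < m" "1 \<le> a"
  shows "(\<Sum>i. \<integral>\<^sup>+x\<in>rice_tail s (a + i * m). ennreal (laplace_density \<theta> x) \<partial>lborel)
    = ennreal (\<theta> powr (real a / 2) * (\<theta> powr s + \<theta> powr (- s)) / (2 * (1 - \<theta> powr (real m / 2))))"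
proof -
  have half: "s \<le> real n / 2" if "1 \<le> n" for n :: nat
  proof -
    have "1 \<le> real n" using that by simp
    then show ?thesis using s(2) by linarith
  qed
  have tail: "(\<integral>\<^sup>+x\<in>rice_tail s (a + i * m). ennreal (laplace_density \<theta> x) \<partial>lborel)
      = ennreal ((\<theta> powr (real (a + i * m) / 2 - s) + \<theta> powr (real (a + i * m) / 2 + s)) / 2)" for i
    by (rule nn_integral_laplace_density_rice_tail[OF \<theta> s(1) half]) (use assms(6) in simp)
  show ?thesis
    unfolding tail by (rule suminf_ennreal_eq[OF _ sums_laplace_tails[OF \<theta> assms(5)]]) simp
qed

lemma has_integral_code_len_laplace:
  fixes m F :: nat and \<theta> s :: real
  assumes \<theta>: "0 < \<theta>" "\<theta> < 1" and s: "0 \<le> s" "s \<le> 1/2"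
    and F: "2 ^ F \<le> m" "m < 2 ^ (F + 1)"
  shows "((\<lambda>x. code_len m (x + s) * laplace_density \<theta> x) has_integral
    1 + F + \<theta> powr (real (2 ^ (F + 1) - m) / 2) * (\<theta> powr s + \<theta> powr (- s))
            / (2 * (1 - \<theta> powr (real m / 2)))) UNIV"
proof -
  define a where "a = 2 ^ (F + 1) - m"
  define d where "d = laplace_density \<theta>"
  define A where "A i = rice_tail s (a + i * m)" for i
  define G where "G = \<theta> powr (real a / 2) * (\<theta> powr s + \<theta> powr (- s)) / (2 * (1 - \<theta> powr (real m / 2)))"
  have a: "1 \<le> a" using F(2) by (simp add: a_def)
  have m: "0 < m" using F(1) by (metis le_0_eq not_gr0 power_eq_0_iff zero_neq_numeral)
  have d: "0 \<le> d x" for x using laplace_density_nonneg[OF \<theta>] by (simp add: d_def)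
  have [measurable]: "d \<in> borel_measurable borel" "A i \<in> sets borel" for i
    by (simp_all add: d_def A_def)
  have G_nonneg: "0 \<le> G"
    using powr_less_one_of_base_less_one[OF \<theta>, of "real m / 2"] m by (simp add: G_def)
  have "(\<integral>\<^sup>+x. ennreal (code_len m (x + s) * d x) \<partial>lborel)
      = (\<integral>\<^sup>+x. of_nat (1 + F) * ennreal (d x) \<partial>lborel)
        + (\<integral>\<^sup>+x. (\<Sum>i. ennreal (d x) * indicator (A i) x) \<partial>lborel)"
    unfolding code_len_shift_mult_eq_suminf[OF F d] A_def a_def by (rule nn_integral_add) measurable
  also have "(\<integral>\<^sup>+x. of_nat (1 + F) * ennreal (d x) \<partial>lborel)
      = of_nat (1 + F) * (\<integral>\<^sup>+x. ennreal (d x) \<partial>lborel)"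
    by (rule nn_integral_cmult) measurable
  also have "(\<integral>\<^sup>+x. (\<Sum>i. ennreal (d x) * indicator (A i) x) \<partial>lborel)
      = (\<Sum>i. \<integral>\<^sup>+x\<in>A i. ennreal (d x) \<partial>lborel)"
    by (rule nn_integral_suminf) measurable
  also have "(\<integral>\<^sup>+x. ennreal (d x) \<partial>lborel) = 1"
    unfolding d_def by (rule nn_integral_laplace_density[OF \<theta>])
  also have "(\<Sum>i. \<integral>\<^sup>+x\<in>A i. ennreal (d x) \<partial>lborel) = ennreal G"
    unfolding A_def d_def G_def by (rule suminf_nn_integral_laplace_density_rice_tails[OF \<theta> s m a])
  finally have "(\<integral>\<^sup>+x. ennreal (code_len m (x + s) * d x) \<partial>lborel) = ennreal (1 + F + G)"
    using G_nonneg by (simp add: ennreal_of_nat_eq_real_of_nat)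
  then have "((\<lambda>x. code_len m (x + s) * d x) has_integral 1 + F + G) UNIV"
    by (intro nn_integral_has_integral) (use d G_nonneg in \<open>auto simp: code_len_def d_def\<close>)
  then show ?thesis by (simp add: d_def G_def a_def)
qed

theorem theorem2:
  fixes \<theta> :: real and m \<rho> \<tau> :: nat
  assumes "0 < \<theta>" and "\<theta> < 1"
    and "0 < \<rho>" and "\<rho> \<le> \<tau>"
    and "0 < m" and "\<forall>\<beta>::nat. m \<noteq> 2 ^ \<beta>"
  shows "let T = (2::real) ^ nat \<lceil>lg (real m)\<rceil> - real m - 1 in
    avg_code_len m \<rho> \<tau> \<theta> =
      1 + real_of_int \<lfloor>lg (real m)\<rfloor>
      + 1/2 * (\<theta> powr ((T + 1) / 2) / (1 - \<theta> powr (real m / 2)))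
          * (\<theta> powr (real \<rho> / (2 * real \<tau>)) + \<theta> powr (- (real \<rho> / (2 * real \<tau>))))"
proof -
  obtain F where F: "2 ^ F \<le> m" "m < 2 ^ (F + 1)"
    using ex_power_ivl1[of 2 m] assms(5) by auto
  have "2 ^ F < m" using F(1) assms(6) by (auto simp: le_less)
  then have floor_lg: "\<lfloor>lg m\<rfloor> = F" and ceiling_lg: "nat \<lceil>lg m\<rceil> = F + 1"
    using floor_log_nat_eq_if[OF F] ceiling_log_nat_eq_if[of 2 F m] F(2) by (simp_all add: lg_def)
  define s where "s = real \<rho> / (2 * real \<tau>)"
  have s: "0 \<le> s" "s \<le> 1/2" using assms(3,4) by (auto simp: s_def field_simps)
  have avg: "avg_code_len m \<rho> \<tau> \<theta> = 1 + F + \<theta> powr (real (2 ^ (F + 1) - m) / 2)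
      * (\<theta> powr s + \<theta> powr (- s)) / (2 * (1 - \<theta> powr (real m / 2)))"
    unfolding avg_code_len_def code_len_prec_def s_def[symmetric]
    by (rule integral_unique[OF has_integral_code_len_laplace[OF assms(1,2) s F]])
  have exponent: "((2::real) ^ (F + 1) - real m - 1 + 1) / 2 = real (2 ^ (F + 1) - m) / 2"
    using F(2) by simp
  show ?thesis
    unfolding Let_def ceiling_lg floor_lg s_def[symmetric] exponent avg by simp
qed

end
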